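(* Let $A$ be a $p$-Zariskian ring (not necessarily Noetherian) with Jacobson radical $\mathrm{Jac}(A)$. If $A$ has a $\delta$-structure $\delta$, then $\delta(x)\in\mathrm{Jac}(A)$ for every $x\in\mathrm{Jac}(A)^2$. In particular, no distinguished element of $A$ belongs to $\mathrm{Jac}(A)^2$. If the $\delta$-ring $A$ is local with maximal ideal $\mathfrak{m}$, then $A$ is unramified, i.e. $p\in\mathfrak{m}\setminus\mathfrak{m}^2$.
   Context: All rings are commutative $\mathbb{Z}_{(p)}$-algebras. A ring is $p$-Zariskian if $p\in\mathrm{Jac}(A)$. A $\delta$-structure is a map $\delta:A\to A$ with $\delta(0)=\delta(1)=0$, $\delta(a+b)=\delta(a)+\delta(b)+\frac{a^p+b^p-(a+b)^p}{p}$, $\delta(ab)=a^p\delta(b)+b^p\delta(a)+p\delta(a)\delta(b)$. An element $d$ is distinguished if $\delta(d)$ is a unit. *)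

theory Defs
  imports Main "HOL-Computational_Algebra.Primes"
begin

definition is_ideal :: "'a::comm_ring_1 set \<Rightarrow> bool" where
  "is_ideal I \<longleftrightarrow> 0 \<in> I \<and> (\<forall>x\<in>I. \<forall>y\<in>I. x + y \<in> I) \<and> (\<forall>x\<in>I. \<forall>r. r * x \<in> I)"

definition maximal_ideal :: "'a::comm_ring_1 set \<Rightarrow> bool" where
  "maximal_ideal M \<longleftrightarrow> is_ideal M \<and> M \<noteq> UNIV \<and>
     (\<forall>J. is_ideal J \<and> M \<subseteq> J \<longrightarrow> J = M \<or> J = UNIV)"

definition jacobson_radical :: "'a::comm_ring_1 set" where
  "jacobson_radical = \<Inter>{M. maximal_ideal M}"

definition ideal_prod :: "'a::comm_ring_1 set \<Rightarrow> 'a set \<Rightarrow> 'a set" where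
  "ideal_prod I J = \<Inter>{K. is_ideal K \<and> {x * y | x y. x \<in> I \<and> y \<in> J} \<subseteq> K}"

definition Zp_algebra :: "nat \<Rightarrow> 'a::comm_ring_1 itself \<Rightarrow> bool" where
  "Zp_algebra p _ \<longleftrightarrow> (\<forall>n::nat. \<not> p dvd n \<longrightarrow> (of_nat n :: 'a) dvd 1)"

definition p_zariskian :: "nat \<Rightarrow> 'a::comm_ring_1 itself \<Rightarrow> bool" where
  "p_zariskian p _ \<longleftrightarrow> (of_nat p :: 'a) \<in> jacobson_radical"

text \<open>The integer polynomial (a^p + b^p - (a+b)^p)/p, i.e.
  minus the sum over 0<i<p of (binom p i / p) a^i b^(p-i).\<close>
definition delta_cross :: "nat \<Rightarrow> 'a::comm_ring_1 \<Rightarrow> 'a \<Rightarrow> 'a" where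
  "delta_cross p a b = - (\<Sum>i\<in>{1..p-1}. of_nat ((p choose i) div p) * a ^ i * b ^ (p - i))"

definition is_delta_structure :: "nat \<Rightarrow> ('a::comm_ring_1 \<Rightarrow> 'a) \<Rightarrow> bool" where
  "is_delta_structure p \<delta> \<longleftrightarrow> \<delta> 0 = 0 \<and> \<delta> 1 = 0 \<and>
     (\<forall>a b. \<delta> (a + b) = \<delta> a + \<delta> b + delta_cross p a b) \<and>
     (\<forall>a b. \<delta> (a * b) = a ^ p * \<delta> b + b ^ p * \<delta> a + of_nat p * \<delta> a * \<delta> b)"

definition distinguished :: "('a::comm_ring_1 \<Rightarrow> 'a) \<Rightarrow> 'a \<Rightarrow> bool" where
  "distinguished \<delta> d \<longleftrightarrow> \<delta> d dvd 1"

end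

theory Submission
  imports Defs
begin

text \<open>Let \<open>J\<close> be an ideal containing \<open>p\<close>. The elements \<open>x \<in> J\<close> with \<open>\<delta> x \<in> J\<close> form an
  ideal: the cross term \<open>(a\<^sup>p + b\<^sup>p - (a + b)\<^sup>p)/p\<close> is divisible by \<open>a\<close>, and in
  \<open>\<delta>(r x) = r\<^sup>p \<delta>(x) + x\<^sup>p \<delta>(r) + p \<delta>(r) \<delta>(x)\<close> every summand lies in \<open>J\<close>. The
  same product formula puts every \<open>x y\<close> with \<open>x, y \<in> J\<close> into this ideal, so
  \<open>\<delta>(J\<^sup>2) \<subseteq> J\<close>. For \<open>J = Jac(A)\<close> this is the first claim, and a unit \<open>\<delta>(d)\<close> cannot
  lie in the proper ideal \<open>Jac(A)\<close>. Finally, telescoping the additivity formula gives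
  \<open>p \<delta>(n) = n - n\<^sup>p\<close> in \<open>\<int>\<close>, so \<open>\<delta>(p) = 1 - p\<^bsup>p-1\<^esup>\<close>; hence \<open>p \<in> J\<^sup>2\<close> for a proper ideal
  \<open>J \<ni> p\<close> would give \<open>1 \<in> J\<close>.\<close>

lemma ideal_zero: "is_ideal I \<Longrightarrow> 0 \<in> I"
  unfolding is_ideal_def by blast

lemma ideal_add: "is_ideal I \<Longrightarrow> x \<in> I \<Longrightarrow> y \<in> I \<Longrightarrow> x + y \<in> I"
  unfolding is_ideal_def by blast

lemma ideal_mult_left: "is_ideal I \<Longrightarrow> x \<in> I \<Longrightarrow> r * x \<in> I"
  unfolding is_ideal_def by blast

lemma ideal_mult_right: "is_ideal I \<Longrightarrow> x \<in> I \<Longrightarrow> x * r \<in> I"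
  by (metis ideal_mult_left mult.commute)

lemma ideal_uminus: "is_ideal I \<Longrightarrow> x \<in> I \<Longrightarrow> - x \<in> I"
  using ideal_mult_left[of I x "- 1"] by simp

lemma ideal_sum: "is_ideal I \<Longrightarrow> (\<And>i. i \<in> S \<Longrightarrow> f i \<in> I) \<Longrightarrow> sum f S \<in> I"
  by (induction S rule: infinite_finite_induct) (auto simp: ideal_zero ideal_add)

lemma ideal_power: "is_ideal I \<Longrightarrow> x \<in> I \<Longrightarrow> n > 0 \<Longrightarrow> x ^ n \<in> I"
  by (cases n) (auto intro: ideal_mult_right)

lemma ideal_eq_UNIV_if_unit: "is_ideal I \<Longrightarrow> u \<in> I \<Longrightarrow> u dvd 1 \<Longrightarrow> I = UNIV"
  by (metis UNIV_eq_I dvd_def ideal_mult_right mult_1)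

lemma is_ideal_Inter: "(\<And>I. I \<in> S \<Longrightarrow> is_ideal I) \<Longrightarrow> is_ideal (\<Inter>S)"
  unfolding is_ideal_def by blast

lemma is_ideal_Union_chain:
  assumes "C \<noteq> {}" and "\<And>I. I \<in> C \<Longrightarrow> is_ideal I"
    and "\<And>I J. I \<in> C \<Longrightarrow> J \<in> C \<Longrightarrow> I \<subseteq> J \<or> J \<subseteq> I"
  shows "is_ideal (\<Union>C)"
  unfolding is_ideal_def
proof (intro conjI ballI allI)
  show "0 \<in> \<Union>C"
    using assms(1,2) ideal_zero by blast
next
  fix x y assume "x \<in> \<Union>C" "y \<in> \<Union>C"
  then obtain I J where "I \<in> C" "J \<in> C" "x \<in> I" "y \<in> J" by blast
  with assms(2,3) show "x + y \<in> \<Union>C"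
    by (metis UnionI ideal_add subsetD)
next
  fix x r assume "x \<in> \<Union>C"
  with assms(2) show "r * x \<in> \<Union>C"
    using ideal_mult_left by blast
qed

lemma maximal_ideal_is_ideal: "maximal_ideal M \<Longrightarrow> is_ideal M"
  unfolding maximal_ideal_def by blast

lemma one_notin_maximal_ideal: "maximal_ideal M \<Longrightarrow> 1 \<notin> M"
  using ideal_eq_UNIV_if_unit[of M 1] by (auto simp: maximal_ideal_def)

lemma ex_maximal_ideal:
  assumes "(0::'a::comm_ring_1) \<noteq> 1"
  shows "\<exists>M::'a set. maximal_ideal M"
proof -
  define P where "P = {I::'a set. is_ideal I \<and> 1 \<notin> I}"
  have "\<exists>U\<in>P. \<forall>I\<in>C. I \<subseteq> U" if C: "C \<in> chains P" for C
  proof (cases "C = {}")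
    case True
    have "{0} \<in> P"
      using assms by (auto simp: P_def is_ideal_def)
    with True show ?thesis by blast
  next
    case False
    with C have "is_ideal (\<Union>C)"
      by (intro is_ideal_Union_chain) (auto simp: chains_def chain_subset_def P_def)
    moreover have "1 \<notin> \<Union>C"
      using C by (auto simp: chains_def P_def)
    ultimately show ?thesis
      by (auto simp: P_def)
  qed
  then have "\<exists>M\<in>P. \<forall>I\<in>P. M \<subseteq> I \<longrightarrow> I = M"
    by (intro Zorn_Lemma2 ballI)
  then obtain M where M: "M \<in> P" and M_max: "\<And>I. I \<in> P \<Longrightarrow> M \<subseteq> I \<Longrightarrow> I = M"
    by blast
  have "maximal_ideal M"
    unfolding maximal_ideal_def
  proof (intro conjI allI impI)
    show "is_ideal M" "M \<noteq> UNIV"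
      using M by (auto simp: P_def)
    fix J assume "is_ideal J \<and> M \<subseteq> J"
    then show "J = M \<or> J = UNIV"
      using M_max[of J] ideal_eq_UNIV_if_unit[of J 1] by (auto simp: P_def)
  qed
  then show ?thesis by blast
qed

lemma is_ideal_jacobson_radical: "is_ideal jacobson_radical"
  unfolding jacobson_radical_def by (rule is_ideal_Inter) (auto dest: maximal_ideal_is_ideal)

lemma one_notin_jacobson_radical:
  assumes "(0::'a::comm_ring_1) \<noteq> 1"
  shows "(1::'a) \<notin> jacobson_radical"
  using ex_maximal_ideal[OF assms] one_notin_maximal_ideal
  unfolding jacobson_radical_def by blast

lemma jacobson_radical_eq_if_local:
  "{M. maximal_ideal M} = {m} \<Longrightarrow> jacobson_radical = m"
  unfolding jacobson_radical_def by simp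

lemma ideal_prod_least:
  "is_ideal K \<Longrightarrow> (\<And>x y. x \<in> I \<Longrightarrow> y \<in> J \<Longrightarrow> x * y \<in> K) \<Longrightarrow> ideal_prod I J \<subseteq> K"
  unfolding ideal_prod_def by blast

lemma delta_cross_of_int:
  "delta_cross p (of_int a) (of_int b) = (of_int (delta_cross p a b) :: 'a::comm_ring_1)"
  unfolding delta_cross_def by simp

lemma delta_cross_in_ideal: "is_ideal I \<Longrightarrow> a \<in> I \<Longrightarrow> delta_cross p a b \<in> I"
  unfolding delta_cross_def
  by (intro ideal_uminus ideal_sum ideal_mult_right ideal_mult_left ideal_power) auto

lemma of_nat_prime_mult_delta_cross:
  fixes a b :: "'a::comm_ring_1"
  assumes "prime p"
  shows "of_nat p * delta_cross p a b = a ^ p + b ^ p - (a + b) ^ p"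
proof -
  have p2: "p \<ge> 2"
    using assms prime_ge_2_nat by blast
  have p_choose: "of_nat p * of_nat ((p choose i) div p) = (of_nat (p choose i) :: 'a)"
    if "i \<in> {1..p-1}" for i
  proof -
    have "p dvd (p choose i)"
      using that p2 by (intro dvd_choose_prime assms) auto
    then show ?thesis
      by (metis dvd_mult_div_cancel of_nat_mult)
  qed
  have "{..p} = insert 0 (insert p {1..p-1})"
    using p2 by auto
  then have binomial: "(a + b) ^ p
      = a ^ p + b ^ p + (\<Sum>i\<in>{1..p-1}. of_nat (p choose i) * a ^ i * b ^ (p - i))"
    using p2 by (simp add: binomial_ring algebra_simps)
  have "of_nat p * delta_cross p a b
      = - (\<Sum>i\<in>{1..p-1}. of_nat p * of_nat ((p choose i) div p) * a ^ i * b ^ (p - i))"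
    unfolding delta_cross_def by (simp add: sum_distrib_left mult.assoc)
  also have "\<dots> = - (\<Sum>i\<in>{1..p-1}. of_nat (p choose i) * a ^ i * b ^ (p - i))"
    using p_choose by (intro arg_cong[where f = uminus] sum.cong) auto
  finally show ?thesis
    by (simp add: binomial)
qed

lemma delta_of_nat:
  assumes "is_delta_structure p \<delta>"
  shows "\<delta> (of_nat n) = of_int (\<Sum>k<n. delta_cross p (int k) 1)"
proof (induction n)
  case 0
  then show ?case
    using assms by (simp add: is_delta_structure_def)
next
  case (Suc n)
  have "\<delta> (of_nat (Suc n)) = \<delta> (of_nat n + 1)"
    by (simp add: add.commute)
  also have "\<dots> = \<delta> (of_nat n) + delta_cross p (of_int (int n)) (of_int 1)"
    using assms unfolding is_delta_structure_def by simp
  finally show ?case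
    using Suc by (simp only: delta_cross_of_int) simp
qed

lemma delta_of_prime:
  assumes "prime p" and "is_delta_structure p \<delta>"
  shows "\<delta> (of_nat p) = 1 - of_nat p ^ (p - 1)"
proof -
  define c where "c = (\<Sum>k<p. delta_cross p (int k) 1)"
  have p2: "p \<ge> 2"
    using assms(1) prime_ge_2_nat by blast
  have "int p * c = (\<Sum>k<p. 1 + (int k ^ p - int (Suc k) ^ p))"
    unfolding c_def sum_distrib_left of_nat_prime_mult_delta_cross[OF assms(1)]
    by (simp add: algebra_simps)
  also have "\<dots> = int p - int p ^ p"
    using p2 sum_lessThan_telescope'[of "\<lambda>k. int k ^ p" p] by (simp add: sum.distrib)
  also have "\<dots> = int p * (1 - int p ^ (p - 1))"
    using p2 by (simp add: right_diff_distrib power_eq_if)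
  finally have "c = 1 - int p ^ (p - 1)"
    using p2 by simp
  then show ?thesis
    using delta_of_nat[OF assms(2), of p] by (simp add: c_def)
qed

lemma delta_ideal_prod_self:
  assumes "is_delta_structure p \<delta>" and "p > 0"
    and "is_ideal J" and "of_nat p \<in> J" and "x \<in> ideal_prod J J"
  shows "\<delta> x \<in> J"
proof -
  have \<delta>_0: "\<delta> 0 = 0"
    and \<delta>_add: "\<And>a b. \<delta> (a + b) = \<delta> a + \<delta> b + delta_cross p a b"
    and \<delta>_mult: "\<And>a b. \<delta> (a * b) = a ^ p * \<delta> b + b ^ p * \<delta> a + of_nat p * \<delta> a * \<delta> b"
    using assms(1) unfolding is_delta_structure_def by auto
  define S where "S = {x \<in> J. \<delta> x \<in> J}"
  have "is_ideal S"
    unfolding is_ideal_def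
  proof (intro conjI ballI allI)
    show "0 \<in> S"
      using assms(3) by (simp add: S_def \<delta>_0 ideal_zero)
  next
    fix x y assume "x \<in> S" "y \<in> S"
    then show "x + y \<in> S"
      using assms(3) by (auto simp: S_def \<delta>_add intro!: ideal_add delta_cross_in_ideal)
  next
    fix x r assume "x \<in> S"
    then have "x \<in> J" "\<delta> x \<in> J"
      by (auto simp: S_def)
    then have "r ^ p * \<delta> x \<in> J" "x ^ p * \<delta> r \<in> J" "of_nat p * \<delta> r * \<delta> x \<in> J"
      using assms(2,3) by (auto intro: ideal_mult_left ideal_mult_right ideal_power)
    with \<open>x \<in> J\<close> show "r * x \<in> S"
      using assms(3) by (auto simp: S_def \<delta>_mult intro: ideal_add ideal_mult_left)
  qed
  moreover have "x * y \<in> S" if "x \<in> J" "y \<in> J" for x y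
    using that assms(2-4)
    by (auto simp: S_def \<delta>_mult intro!: ideal_add ideal_mult_left ideal_mult_right ideal_power)
  ultimately have "ideal_prod J J \<subseteq> S"
    by (rule ideal_prod_least)
  with assms(5) show ?thesis
    by (auto simp: S_def)
qed

lemma of_nat_prime_notin_ideal_prod_self:
  fixes \<delta> :: "'a::comm_ring_1 \<Rightarrow> 'a" and J :: "'a set"
  assumes "prime p" and "is_delta_structure p \<delta>"
    and "is_ideal J" and "1 \<notin> J" and "of_nat p \<in> J"
  shows "of_nat p \<notin> ideal_prod J J"
proof
  assume "of_nat p \<in> ideal_prod J J"
  then have "\<delta> (of_nat p) \<in> J"
    by (rule delta_ideal_prod_self[OF assms(2) prime_gt_0_nat[OF assms(1)] assms(3,5)])
  then have "1 - of_nat p ^ (p - 1) \<in> J"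
    by (simp only: delta_of_prime[OF assms(1,2)])
  moreover have "of_nat p ^ (p - 1) \<in> J"
    using assms(3,5) prime_ge_2_nat[OF assms(1)] by (intro ideal_power) auto
  ultimately have "(1 - of_nat p ^ (p - 1)) + of_nat p ^ (p - 1) \<in> J"
    by (rule ideal_add[OF assms(3)])
  with assms(4) show False
    by simp
qed

theorem lemma3p3:
  fixes p :: nat and \<delta> :: "'a::comm_ring_1 \<Rightarrow> 'a"
  assumes "prime p"
    and "(0::'a) \<noteq> 1"
    and "Zp_algebra p TYPE('a)"
    and "p_zariskian p TYPE('a)"
    and "is_delta_structure p \<delta>"
  shows "(\<forall>x \<in> ideal_prod jacobson_radical jacobson_radical. \<delta> x \<in> (jacobson_radical :: 'a set))
    \<and> (\<forall>d. distinguished \<delta> d \<longrightarrow> d \<notin> ideal_prod jacobson_radical (jacobson_radical :: 'a set))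
    \<and> (\<forall>m :: 'a set. {M. maximal_ideal M} = {m} \<longrightarrow>
          (of_nat p :: 'a) \<in> m \<and> (of_nat p :: 'a) \<notin> ideal_prod m m)"
proof (intro conjI ballI allI impI)
  have p_Jac: "(of_nat p :: 'a) \<in> jacobson_radical"
    using assms(4) by (simp add: p_zariskian_def)
  show \<delta>_Jac2: "\<delta> x \<in> jacobson_radical" if "x \<in> ideal_prod jacobson_radical jacobson_radical" for x
    by (rule delta_ideal_prod_self[OF assms(5) prime_gt_0_nat[OF assms(1)]
          is_ideal_jacobson_radical p_Jac that])
  show "d \<notin> ideal_prod jacobson_radical jacobson_radical" if "distinguished \<delta> d" for d
    using that \<delta>_Jac2 ideal_eq_UNIV_if_unit[OF is_ideal_jacobson_radical]
      one_notin_jacobson_radical[OF assms(2)] unfolding distinguished_def by blast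
  fix m :: "'a set" assume local_ring: "{M. maximal_ideal M} = {m}"
  then have m: "maximal_ideal m"
    by blast
  from local_ring have Jac_eq: "jacobson_radical = m"
    by (rule jacobson_radical_eq_if_local)
  with p_Jac show p_m: "of_nat p \<in> m"
    by simp
  show "of_nat p \<notin> ideal_prod m m"
    using of_nat_prime_notin_ideal_prod_self[OF assms(1,5) maximal_ideal_is_ideal[OF m]
        one_notin_maximal_ideal[OF m] p_m] .
qed

end
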